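(* Let $G$ be the cube graph $Q_3$. Then $T_3(G)=6$.
   Context: Fix a set $\Sigma$ of symbols (bond-edge types) and a disjoint copy $\hat\Sigma=\{\hat a:a\in\Sigma\}$ with $\hat{\hat a}=a$; elements of $\Sigma\cup\hat\Sigma$ are cohesive-end types. A tile is a finite multiset of cohesive-end types. A pot is a finite set $P$ of tiles such that whenever $x$ occurs in a tile of $P$, $\hat x$ occurs in some tile of $P$; $\#P$ is its number of tiles. Graphs are finite, loops and multiple edges allowed. An assembly design of a graph $H$ labels the half-edges of $H$ by cohesive-end types so that the two half-edges of each edge receive complementary labels $x,\hat x$; $t_v$ is the multiset of labels at $v$, $P_\lambda(H)=\{t_v\}$, and $P$ realizes $H$ ($H\in\mathcal{O}(P)$) if some assembly design $\lambda$ has $P_\lambda(H)\subseteq P$. $P$ realizes $G$ according to Scenario 3 if $G\in\mathcal{O}(P)$, every $H\in\mathcal{O}(P)$ has $\#V(H)\ge\#V(G)$, and every $H\in\mathcal{O}(P)$ with $\#V(H)=\#V(G)$ is isomorphic to $G$. $T_3(G)=\min\{\#P: P \text{ realizes } G \text{ according to Scenario 3}\}$. *)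

theory Defs
  imports Main "HOL-Library.Multiset"
begin

text \<open>Bond-edge types are natural numbers (a countably infinite supply Sigma).
  A cohesive-end type is a pair (a, h): h = False means a, h = True means hat a.\<close>

type_synonym cend = "nat \<times> bool"
type_synonym tile = "cend multiset"

definition hat :: "cend \<Rightarrow> cend" where
  "hat x = (fst x, \<not> snd x)"

definition is_pot :: "tile set \<Rightarrow> bool" where
  "is_pot P \<longleftrightarrow> finite P \<and>
     (\<forall>t\<in>P. \<forall>x. x \<in># t \<longrightarrow> (\<exists>t'\<in>P. hat x \<in># t'))"

text \<open>Finite multigraphs (loops and multiple edges allowed). Each edge e has two
  half-edges (e, True) and (e, False) whose ends are endp e True and endp e False.\<close>

record mgraph =
  verts :: "nat set"
  edges :: "nat set"
  endp :: "nat \<Rightarrow> bool \<Rightarrow> nat"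

definition wf_graph :: "mgraph \<Rightarrow> bool" where
  "wf_graph G \<longleftrightarrow> finite (verts G) \<and> verts G \<noteq> {} \<and> finite (edges G) \<and>
     (\<forall>e\<in>edges G. \<forall>b. endp G e b \<in> verts G)"

definition graph_iso :: "mgraph \<Rightarrow> mgraph \<Rightarrow> bool" where
  "graph_iso G H \<longleftrightarrow> (\<exists>f g. bij_betw f (verts G) (verts H) \<and> bij_betw g (edges G) (edges H) \<and>
     (\<forall>e\<in>edges G. {# f (endp G e True), f (endp G e False) #} =
                    {# endp H (g e) True, endp H (g e) False #}))"

definition assembly_design :: "mgraph \<Rightarrow> (nat \<Rightarrow> bool \<Rightarrow> cend) \<Rightarrow> bool" where
  "assembly_design G lam \<longleftrightarrow> (\<forall>e\<in>edges G. lam e True = hat (lam e False))"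

definition tile_at :: "mgraph \<Rightarrow> (nat \<Rightarrow> bool \<Rightarrow> cend) \<Rightarrow> nat \<Rightarrow> tile" where
  "tile_at G lam v =
     image_mset (\<lambda>(e, b). lam e b) (mset_set {(e, b). e \<in> edges G \<and> endp G e b = v})"

definition pot_of :: "mgraph \<Rightarrow> (nat \<Rightarrow> bool \<Rightarrow> cend) \<Rightarrow> tile set" where
  "pot_of G lam = tile_at G lam ` verts G"

definition realizes :: "tile set \<Rightarrow> mgraph \<Rightarrow> bool" where
  "realizes P H \<longleftrightarrow> (\<exists>lam. assembly_design H lam \<and> pot_of H lam \<subseteq> P)"

definition realizes_S3 :: "tile set \<Rightarrow> mgraph \<Rightarrow> bool" where
  "realizes_S3 P G \<longleftrightarrow> realizes P G \<and>
     (\<forall>H. wf_graph H \<and> realizes P H \<longrightarrow> card (verts H) \<ge> card (verts G)) \<and>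
     (\<forall>H. wf_graph H \<and> realizes P H \<and> card (verts H) = card (verts G) \<longrightarrow> graph_iso G H)"

definition T3 :: "mgraph \<Rightarrow> nat" where
  "T3 G = (LEAST n. \<exists>P. is_pot P \<and> card P = n \<and> realizes_S3 P G)"

text \<open>The cube graph Q3 on vertices 0..7 (bit strings), edges join strings differing in one bit.\<close>

definition cube_edge_list :: "(nat \<times> nat) list" where
  "cube_edge_list = [(0,1),(2,3),(4,5),(6,7),(0,2),(1,3),(4,6),(5,7),(0,4),(1,5),(2,6),(3,7)]"

definition Q3 :: mgraph where
  "Q3 = \<lparr> verts = {0..<8}, edges = {0..<12},
          endp = (\<lambda>e b. if b then fst (cube_edge_list ! e) else snd (cube_edge_list ! e)) \<rparr>"

end

(*
  Suppose a pot realizes Q3 according to Scenario 3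
  and two half-edges of a realizing assembly design carry the same cohesive-end type.
  Exchanging the endpoints of these half-edges gives another graph on eight vertices realized
  by the same pot, hence a copy of Q3, which is again simple and bipartite. As Q3 stays
  connected after deleting any two edges, the two half-edges start at vertices of the same
  colour and either end at a common vertex or each ends outside the other's neighbourhood.
  Consequently the two colour classes use disjoint sets of tiles and no three vertices share a
  tile, so each class uses at least two tiles. If one class uses only two, every vertex of the
  other class has two neighbours with equal tiles, so its own tile contains a doubled
  cohesive-end type, and two such tiles cannot coincide: the other class uses four tiles.

  For the upper bound, writing ^x for the complement of x, the six tiles {a, b, b},
  {^a, c, c}, {d, ^b, ^e}, {^d, ^c, ^g}, {f, e, e}, {^f, g, g} realize Q3. Counting each
  cohesive-end type against its complement shows that a graph realized by them has 8 n
  vertices, n of which carry the first tile; with eight vertices every bond is forced and the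
  graph is Q3.
*)
theory Submission
  imports Defs "HOL-Combinatorics.Transposition"
begin

lemma hat_hat [simp]: "hat (hat x) = x"
  by (simp add: hat_def)

lemma hat_neq [simp]: "hat x \<noteq> x" "x \<noteq> hat x"
  by (auto simp: hat_def prod_eq_iff)

lemma hat_eq_iff: "hat x = hat y \<longleftrightarrow> x = y"
  by (metis hat_hat)

lemma mset_doubleton_eq_iff: "{#a, b#} = {#c, d#} \<longleftrightarrow> (a = c \<and> b = d) \<or> (a = d \<and> b = c)"
  by (auto simp: add_eq_conv_ex)

lemma mset_tripleton_eq_iff: "{#a, b, c#} = {#d, e, f#} \<longleftrightarrow>
   (a = d \<and> b = e \<and> c = f) \<or> (a = d \<and> b = f \<and> c = e) \<or> (a = e \<and> b = d \<and> c = f) \<or>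
   (a = e \<and> b = f \<and> c = d) \<or> (a = f \<and> b = d \<and> c = e) \<or> (a = f \<and> b = e \<and> c = d)"
  by (auto simp: add_eq_conv_ex)

lemma mset_tripleton_doubled_eq: "{#x, x, y#} = {#x', x', y'#} \<Longrightarrow> x = x'"
  by (auto simp: mset_tripleton_eq_iff)

lemma image_mset_inj_on_eq:
  "image_mset f M = image_mset f N \<Longrightarrow> inj_on f (set_mset M \<union> set_mset N) \<Longrightarrow> M = N"
  using image_mset_eq_image_mset_plusD[of f M N "{#}"] by auto

lemma image_mset_mset_set_card_3:
  assumes "finite A" "card A = 3" "a \<in> A" "b \<in> A" "a \<noteq> b"
  obtains c where "image_mset f (mset_set A) = {#f a, f b, f c#}"
proof -
  have "card (A - {a, b}) = 1"
    using assms by (simp add: card_Diff_subset)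
  then obtain c where "A - {a, b} = {c}"
    by (auto simp: card_1_singleton_iff)
  then have "A = {a, b, c}" "c \<noteq> a" "c \<noteq> b"
    using assms(3,4) by auto
  then show ?thesis
    using that assms(5) by (simp add: add_mset_commute)
qed

lemma card_le_twice_card_image:
  assumes "finite S"
    and no_three: "\<And>a b c. a \<in> S \<Longrightarrow> b \<in> S \<Longrightarrow> c \<in> S \<Longrightarrow> a \<noteq> b \<Longrightarrow> a \<noteq> c \<Longrightarrow> b \<noteq> c \<Longrightarrow>
      f a = f b \<Longrightarrow> f a = f c \<Longrightarrow> False"
  shows "card S \<le> 2 * card (f ` S)"
proof -
  have fibre: "card {x. x \<in> S \<and> f x = y} \<le> 2" for y
  proof (rule ccontr)
    let ?F = "{x. x \<in> S \<and> f x = y}"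
    assume "\<not> card ?F \<le> 2"
    then have fin: "finite ?F" and card: "3 \<le> card ?F"
      using assms(1) by auto
    then obtain a where a: "a \<in> ?F"
      by (metis all_not_in_conv card.empty not_numeral_le_zero)
    then have "2 \<le> card (?F - {a})"
      using card fin by (simp add: card_Diff_singleton)
    then obtain b where b: "b \<in> ?F - {a}"
      by (metis all_not_in_conv card.empty not_numeral_le_zero)
    then have "1 \<le> card (?F - {a} - {b})"
      using \<open>2 \<le> card (?F - {a})\<close> fin by (simp add: card_Diff_singleton)
    then obtain c where c: "c \<in> ?F - {a} - {b}"
      by (metis all_not_in_conv card.empty not_one_le_zero)
    show False
      using no_three[of a b c] a b c by auto
  qed
  have "card S = (\<Sum>y\<in>f ` S. card {x. x \<in> S \<and> f x = y})"
    using sum.image_gen[OF assms(1), of "\<lambda>_. 1" f] by (simp only: card_eq_sum)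
  also have "\<dots> \<le> card (f ` S) * 2"
    using sum_bounded_above[of "f ` S" "\<lambda>y. card {x. x \<in> S \<and> f x = y}" 2] fibre by simp
  finally show ?thesis by simp
qed

lemma card_image_less_obtains_collision:
  assumes "finite A" "card (f ` A) < card A"
  obtains a b where "a \<in> A" "b \<in> A" "a \<noteq> b" "f a = f b"
  using assms card_image[of f A] unfolding inj_on_def by auto

lemma sum_eq_sum_card_fibres:
  assumes "finite V" "finite P" "\<And>v. v \<in> V \<Longrightarrow> t v \<in> P"
  shows "(\<Sum>v\<in>V. g (t v)) = (\<Sum>T\<in>P. card {v \<in> V. t v = T} * g T)"
proof -
  have "(\<Sum>v\<in>V. g (t v)) = (\<Sum>T\<in>P. \<Sum>v\<in>{v \<in> V. t v = T}. g (t v))"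
    using assms by (intro sum.group[symmetric]) auto
  also have "\<dots> = (\<Sum>T\<in>P. card {v \<in> V. t v = T} * g T)"
    by (intro sum.cong) auto
  finally show ?thesis .
qed

lemma bij_betw_nth_if_card_eq:
  assumes "distinct vs" "set vs \<subseteq> V" "length vs = card V" "finite V"
  shows "bij_betw (\<lambda>i. vs ! i) {0..<length vs} V"
proof -
  have "set vs = V"
    using assms card_subset_eq[OF assms(4,2)] by (simp add: distinct_card)
  then show ?thesis
    using bij_betw_nth[OF assms(1)] by (simp add: atLeast0LessThan)
qed

definition ends :: "mgraph \<Rightarrow> nat \<Rightarrow> nat multiset" where
  "ends G e = {#endp G e True, endp G e False#}"

lemma ends_from: "ends G e = {#endp G e b, endp G e (\<not> b)#}"
  by (cases b) (simp_all add: ends_def add_mset_commute)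

definition adjacent :: "mgraph \<Rightarrow> nat \<Rightarrow> nat \<Rightarrow> bool" where
  "adjacent G u v \<longleftrightarrow> (\<exists>e\<in>edges G. ends G e = {#u, v#})"

definition neighbours :: "mgraph \<Rightarrow> nat \<Rightarrow> nat set" where
  "neighbours G v = {u. adjacent G v u}"

lemma neighbours_sym: "u \<in> neighbours G v \<longleftrightarrow> v \<in> neighbours G u"
  by (auto simp: neighbours_def adjacent_def add_mset_commute)

definition loop_free :: "mgraph \<Rightarrow> bool" where
  "loop_free G \<longleftrightarrow> (\<forall>e\<in>edges G. endp G e True \<noteq> endp G e False)"

definition no_parallel_edges :: "mgraph \<Rightarrow> bool" where
  "no_parallel_edges G \<longleftrightarrow> inj_on (ends G) (edges G)"

definition proper_colouring :: "mgraph \<Rightarrow> (nat \<Rightarrow> bool) \<Rightarrow> bool" where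
  "proper_colouring G c \<longleftrightarrow> (\<forall>e\<in>edges G. c (endp G e True) \<noteq> c (endp G e False))"

definition bipartite :: "mgraph \<Rightarrow> bool" where
  "bipartite G \<longleftrightarrow> (\<exists>c. proper_colouring G c)"

lemma proper_colouringD:
  "proper_colouring G c \<Longrightarrow> e \<in> edges G \<Longrightarrow> c (endp G e b) \<noteq> c (endp G e (\<not> b))"
  by (cases b) (auto simp: proper_colouring_def)

lemma proper_colouring_ends:
  "proper_colouring G c \<Longrightarrow> e \<in> edges G \<Longrightarrow> ends G e = {#u, v#} \<Longrightarrow> c u \<noteq> c v"
  by (auto simp: proper_colouring_def ends_def mset_doubleton_eq_iff)

lemma proper_colouring_neighbour:
  assumes "proper_colouring G c" "u \<in> neighbours G v"
  shows "c u \<noteq> c v"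
proof -
  obtain e where "e \<in> edges G" "ends G e = {#v, u#}"
    using assms(2) by (auto simp: neighbours_def adjacent_def)
  then show ?thesis
    using proper_colouring_ends[OF assms(1)] by metis
qed

lemma ends_eq_if_image_mset_eq:
  assumes "wf_graph G" "inj_on f (verts G)" "d \<in> edges G" "e \<in> edges G"
    and "image_mset f (ends G d) = image_mset f (ends G e)"
  shows "ends G d = ends G e"
proof (rule image_mset_inj_on_eq[OF assms(5)], rule inj_on_subset[OF assms(2)])
  show "set_mset (ends G d) \<union> set_mset (ends G e) \<subseteq> verts G"
    using assms(1,3,4) by (auto simp: ends_def wf_graph_def)
qed

lemma graph_isoE:
  assumes "graph_iso G H"
  obtains f g where "bij_betw f (verts G) (verts H)" "bij_betw g (edges G) (edges H)"
    "\<And>e. e \<in> edges G \<Longrightarrow> ends H (g e) = image_mset f (ends G e)"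
  using assms unfolding graph_iso_def ends_def by auto

lemma no_parallel_edges_iso:
  assumes "wf_graph G" "graph_iso G H" "no_parallel_edges G"
  shows "no_parallel_edges H"
proof -
  obtain f g where f: "bij_betw f (verts G) (verts H)" and g: "bij_betw g (edges G) (edges H)"
    and fg: "\<And>e. e \<in> edges G \<Longrightarrow> ends H (g e) = image_mset f (ends G e)"
    using graph_isoE[OF assms(2)] by blast
  have "inj_on (ends H \<circ> g) (edges G)"
  proof (rule inj_onI)
    fix d e assume de: "d \<in> edges G" "e \<in> edges G" "(ends H \<circ> g) d = (ends H \<circ> g) e"
    then have "ends G d = ends G e"
      using fg[OF de(1)] fg[OF de(2)] f
      by (intro ends_eq_if_image_mset_eq[where f = f, OF assms(1) _ de(1,2)]) (simp_all add: bij_betw_def)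
    then show "d = e"
      using assms(3) de by (auto simp: no_parallel_edges_def inj_on_def)
  qed
  then have "inj_on (ends H) (g ` edges G)"
    by (rule inj_on_imageI)
  then show ?thesis
    using g by (simp add: no_parallel_edges_def bij_betw_def)
qed

lemma bipartite_iso:
  assumes "wf_graph G" "graph_iso G H" "bipartite G"
  shows "bipartite H"
proof -
  obtain f g where f: "bij_betw f (verts G) (verts H)" and g: "bij_betw g (edges G) (edges H)"
    and fg: "\<And>e. e \<in> edges G \<Longrightarrow> ends H (g e) = image_mset f (ends G e)"
    using graph_isoE[OF assms(2)] by blast
  obtain c where c: "proper_colouring G c"
    using assms(3) by (auto simp: bipartite_def)
  define c' where "c' = c \<circ> inv_into (verts G) f"
  have "proper_colouring H c'"
    unfolding proper_colouring_def
  proof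
    fix e' assume "e' \<in> edges H"
    then obtain e where e: "e \<in> edges G" "e' = g e"
      using g by (auto simp: bij_betw_def)
    have c': "c' (f (endp G e b)) = c (endp G e b)" for b
      using assms(1) e(1) f by (simp add: c'_def wf_graph_def bij_betw_def)
    have "{#endp H e' True, endp H e' False#} = {#f (endp G e True), f (endp G e False)#}"
      using fg[OF e(1)] e(2) by (simp add: ends_def)
    then show "c' (endp H e' True) \<noteq> c' (endp H e' False)"
      using c' proper_colouringD[OF c e(1), of True] unfolding mset_doubleton_eq_iff by force
  qed
  then show ?thesis by (auto simp: bipartite_def)
qed

lemma graph_iso_if_edges_embed:
  assumes "wf_graph G" "no_parallel_edges G" "bij_betw f (verts G) (verts H)"
    and "finite (edges H)" "card (edges H) = card (edges G)"
    and "\<And>e. e \<in> edges G \<Longrightarrow> f (endp G e False) \<in> neighbours H (f (endp G e True))"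
  shows "graph_iso G H"
proof -
  have "\<exists>e'. e' \<in> edges H \<and> ends H e' = image_mset f (ends G e)" if "e \<in> edges G" for e
    using assms(6)[OF that] by (auto simp: neighbours_def adjacent_def ends_def)
  then obtain g where g: "\<And>e. e \<in> edges G \<Longrightarrow> g e \<in> edges H \<and> ends H (g e) = image_mset f (ends G e)"
    by metis
  have "inj_on g (edges G)"
  proof (rule inj_onI)
    fix d e assume de: "d \<in> edges G" "e \<in> edges G" "g d = g e"
    then have "ends G d = ends G e"
      using g[OF de(1)] g[OF de(2)] assms(3)
      by (intro ends_eq_if_image_mset_eq[where f = f, OF assms(1) _ de(1,2)]) (simp_all add: bij_betw_def)
    then show "d = e"
      using assms(2) de(1,2) by (auto simp: no_parallel_edges_def inj_on_def)
  qed
  moreover have "g ` edges G = edges H"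
    using g assms(1,4,5) \<open>inj_on g (edges G)\<close>
    by (intro card_subset_eq) (auto simp: card_image wf_graph_def)
  ultimately have bij_g: "bij_betw g (edges G) (edges H)"
    by (simp add: bij_betw_def)
  show ?thesis
    unfolding graph_iso_def using assms(3) bij_g g
    by (intro exI[where x = f] exI[where x = g]) (simp add: ends_def)
qed

definition half_edges_at :: "mgraph \<Rightarrow> nat \<Rightarrow> (nat \<times> bool) set" where
  "half_edges_at G v = {(e, b). e \<in> edges G \<and> endp G e b = v}"

definition near :: "mgraph \<Rightarrow> nat \<times> bool \<Rightarrow> nat" where
  "near G h = endp G (fst h) (snd h)"

definition far :: "mgraph \<Rightarrow> nat \<times> bool \<Rightarrow> nat" where
  "far G h = endp G (fst h) (\<not> snd h)"

definition opposite :: "nat \<times> bool \<Rightarrow> nat \<times> bool" where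
  "opposite h = (fst h, \<not> snd h)"

lemma near_far_opposite [simp]:
  "near G (opposite h) = far G h" "far G (opposite h) = near G h" "fst (opposite h) = fst h"
  by (simp_all add: near_def far_def opposite_def)

lemma mem_half_edges_at: "h \<in> half_edges_at G v \<longleftrightarrow> fst h \<in> edges G \<and> near G h = v"
  by (cases h) (simp add: half_edges_at_def near_def)

lemma finite_half_edges_at: "finite (edges G) \<Longrightarrow> finite (half_edges_at G v)"
  by (rule finite_subset[of _ "edges G \<times> UNIV"]) (auto simp: half_edges_at_def)

lemma ends_near_far: "ends G (fst h) = {#near G h, far G h#}"
  by (simp add: near_def far_def ends_from)

lemma opposite_half_edge: "h \<in> half_edges_at G v \<Longrightarrow> opposite h \<in> half_edges_at G (far G h)"
  by (simp add: mem_half_edges_at)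

lemma far_in_neighbours: "h \<in> half_edges_at G v \<Longrightarrow> far G h \<in> neighbours G v"
  unfolding mem_half_edges_at neighbours_def adjacent_def using ends_near_far by blast

lemma half_edge_towards:
  assumes "u \<in> neighbours G v"
  obtains h where "h \<in> half_edges_at G v" "far G h = u"
proof -
  obtain e where e: "e \<in> edges G" "{#endp G e True, endp G e False#} = {#v, u#}"
    using assms by (auto simp: neighbours_def adjacent_def ends_def)
  then have "(e, True) \<in> half_edges_at G v \<and> far G (e, True) = u \<or>
      (e, False) \<in> half_edges_at G v \<and> far G (e, False) = u"
    by (auto simp: mset_doubleton_eq_iff mem_half_edges_at near_def far_def)
  then show ?thesis using that by blast
qed

lemma neighbours_eq_far_image: "neighbours G v = far G ` half_edges_at G v"
  by (auto intro: far_in_neighbours elim: half_edge_towards)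

lemma half_edge_eq_if_far_eq:
  assumes "loop_free G" "no_parallel_edges G"
    and "h \<in> half_edges_at G v" "h' \<in> half_edges_at G v" "far G h = far G h'"
  shows "h = h'"
proof -
  have "ends G (fst h) = ends G (fst h')"
    using assms(3-5) by (simp add: ends_near_far mem_half_edges_at)
  then have "fst h = fst h'"
    using assms(2-4) by (auto simp: no_parallel_edges_def inj_on_def mem_half_edges_at)
  moreover have "snd h = snd h'"
  proof (rule ccontr)
    assume "snd h \<noteq> snd h'"
    then have "endp G (fst h) True = endp G (fst h) False"
      using assms(3,4) \<open>fst h = fst h'\<close>
      by (cases "snd h") (auto simp: mem_half_edges_at near_def)
    then show False
      using assms(1,3) by (simp add: loop_free_def mem_half_edges_at)
  qed
  ultimately show ?thesis by (simp add: prod_eq_iff)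
qed

lemma tile_at_half_edges:
  "tile_at G lam v = image_mset (case_prod lam) (mset_set (half_edges_at G v))"
  by (simp add: tile_at_def half_edges_at_def)

lemma in_tile_at_iff:
  "finite (edges G) \<Longrightarrow> x \<in># tile_at G lam v \<longleftrightarrow> (\<exists>(e, b)\<in>half_edges_at G v. lam e b = x)"
  by (auto simp: tile_at_half_edges finite_half_edges_at)

lemma shared_label:
  assumes "finite (edges G)" "h \<in> half_edges_at G v" "tile_at G lam v = tile_at G lam w"
  obtains h' where "h' \<in> half_edges_at G w" "case_prod lam h' = case_prod lam h"
proof -
  have "case_prod lam h \<in># tile_at G lam v"
    using assms(1,2) by (auto simp: tile_at_half_edges finite_half_edges_at)
  then have "case_prod lam h \<in># tile_at G lam w"
    using assms(3) by simp
  then show ?thesis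
    using that assms(1) by (auto simp: in_tile_at_iff)
qed

lemma doubled_labels_agree:
  assumes "finite (edges G)" "card (half_edges_at G u) = 3" "card (half_edges_at G u') = 3"
    and "h1 \<in> half_edges_at G u" "h2 \<in> half_edges_at G u" "h1 \<noteq> h2"
    and "h3 \<in> half_edges_at G u'" "h4 \<in> half_edges_at G u'" "h3 \<noteq> h4"
    and "case_prod lam h1 = case_prod lam h2" "case_prod lam h3 = case_prod lam h4"
    and "tile_at G lam u = tile_at G lam u'"
  shows "case_prod lam h1 = case_prod lam h3"
proof -
  have fin: "finite (half_edges_at G v)" for v
    using assms(1) by (rule finite_half_edges_at)
  obtain h5 where "tile_at G lam u = {#case_prod lam h1, case_prod lam h2, case_prod lam h5#}"
    unfolding tile_at_half_edges by (rule image_mset_mset_set_card_3[OF fin assms(2,4-6)])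
  moreover obtain h6 where "tile_at G lam u' = {#case_prod lam h3, case_prod lam h4, case_prod lam h6#}"
    unfolding tile_at_half_edges by (rule image_mset_mset_set_card_3[OF fin assms(3,7-9)])
  ultimately show ?thesis
    using assms(10-12) mset_tripleton_doubled_eq by metis
qed

lemma assembly_design_flip:
  "assembly_design G lam \<Longrightarrow> e \<in> edges G \<Longrightarrow> lam e (\<not> b) = hat (lam e b)"
  by (cases b) (auto simp: assembly_design_def)

lemma label_opposite:
  "assembly_design G lam \<Longrightarrow> fst h \<in> edges G \<Longrightarrow>
    case_prod lam (opposite h) = hat (case_prod lam h)"
  by (cases h) (simp add: opposite_def assembly_design_flip)

lemma complement_in_tile_at_far:
  assumes "wf_graph G" "assembly_design G lam" "h \<in> half_edges_at G v"
  shows "hat (case_prod lam h) \<in># tile_at G lam (far G h)"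
proof -
  have "case_prod lam (opposite h) = hat (case_prod lam h)"
    using label_opposite[OF assms(2)] assms(3) by (simp add: mem_half_edges_at)
  then show ?thesis
    using opposite_half_edge[OF assms(3)] assms(1)
    by (force simp: tile_at_half_edges finite_half_edges_at wf_graph_def)
qed

lemma neighbour_if_complement_unique:
  assumes "wf_graph G" "assembly_design G lam" "x \<in># tile_at G lam v"
    and "\<And>w. w \<in> verts G \<Longrightarrow> hat x \<in># tile_at G lam w \<Longrightarrow> w = u"
  shows "u \<in> neighbours G v"
proof -
  obtain h where h: "h \<in> half_edges_at G v" "case_prod lam h = x"
    using assms(1,3) by (auto simp: in_tile_at_iff wf_graph_def)
  have "far G h \<in> verts G"
    using assms(1) h(1) by (simp add: wf_graph_def far_def mem_half_edges_at)
  then show ?thesis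
    using assms(4) complement_in_tile_at_far[OF assms(1,2) h(1)] h(2) far_in_neighbours[OF h(1)]
    by metis
qed

lemma count_tile_at:
  assumes "finite (edges G)"
  shows "count (tile_at G lam v) x = card {h \<in> half_edges_at G v. case_prod lam h = x}"
  using finite_half_edges_at[OF assms]
  by (simp add: tile_at_half_edges count_image_mset Int_commute Int_def vimage_def conj_commute)

lemma half_edge_unique_if_count_one:
  assumes "finite (edges G)" "count (tile_at G lam v) x = 1"
    and "h \<in> half_edges_at G v" "h' \<in> half_edges_at G v" "case_prod lam h = x" "case_prod lam h' = x"
  shows "h = h'"
proof -
  obtain h0 where h0: "{h \<in> half_edges_at G v. case_prod lam h = x} = {h0}"
    using assms(2) count_tile_at[OF assms(1)] by (auto simp: card_1_singleton_iff)
  have "h \<in> {h \<in> half_edges_at G v. case_prod lam h = x}" "h' \<in> {h \<in> half_edges_at G v. case_prod lam h = x}"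
    using assms(3-6) by simp_all
  then show ?thesis
    unfolding h0 by simp
qed

lemma sum_card_half_edges_at:
  assumes "wf_graph G"
  shows "(\<Sum>v\<in>verts G. card {h \<in> half_edges_at G v. Q h}) = card {h \<in> edges G \<times> UNIV. Q h}"
proof -
  have "{h \<in> edges G \<times> UNIV. Q h} = (\<Union>v\<in>verts G. {h \<in> half_edges_at G v. Q h})"
    using assms by (auto simp: mem_half_edges_at near_def wf_graph_def)
  moreover have "finite {h \<in> half_edges_at G v. Q h}" for v
    using finite_half_edges_at[of G v] assms by (simp add: wf_graph_def)
  then have "card (\<Union>v\<in>verts G. {h \<in> half_edges_at G v. Q h}) =
      (\<Sum>v\<in>verts G. card {h \<in> half_edges_at G v. Q h})"
    using assms by (intro card_UN_disjoint) (auto simp: wf_graph_def mem_half_edges_at)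
  ultimately show ?thesis by simp
qed

lemma sum_size_tile_at:
  assumes "wf_graph G"
  shows "(\<Sum>v\<in>verts G. size (tile_at G lam v)) = 2 * card (edges G)"
proof -
  have "(\<Sum>v\<in>verts G. size (tile_at G lam v)) = (\<Sum>v\<in>verts G. card {h \<in> half_edges_at G v. True})"
    using assms by (simp add: tile_at_half_edges finite_half_edges_at wf_graph_def)
  also have "\<dots> = card (edges G \<times> (UNIV :: bool set))"
    using sum_card_half_edges_at[OF assms, of "\<lambda>_. True"] by simp
  finally show ?thesis
    using assms by (simp add: card_cartesian_product wf_graph_def)
qed

lemma sum_count_tile_at_hat:
  assumes "wf_graph G" "assembly_design G lam"
  shows "(\<Sum>v\<in>verts G. count (tile_at G lam v) x) = (\<Sum>v\<in>verts G. count (tile_at G lam v) (hat x))"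
proof -
  have "bij_betw opposite {h \<in> edges G \<times> UNIV. case_prod lam h = x}
      {h \<in> edges G \<times> UNIV. case_prod lam h = hat x}"
    by (rule bij_betw_byWitness[where f' = opposite])
      (auto simp: opposite_def assembly_design_flip[OF assms(2)])
  then have "card {h \<in> edges G \<times> UNIV. case_prod lam h = x} =
      card {h \<in> edges G \<times> UNIV. case_prod lam h = hat x}"
    by (rule bij_betw_same_card)
  then show ?thesis
    using assms(1) by (simp add: count_tile_at wf_graph_def sum_card_half_edges_at)
qed

definition tile_count :: "mgraph \<Rightarrow> (nat \<Rightarrow> bool \<Rightarrow> cend) \<Rightarrow> tile \<Rightarrow> nat" where
  "tile_count G lam T = card {v \<in> verts G. tile_at G lam v = T}"

lemma vertex_with_tile:
  assumes "0 < tile_count G lam T"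
  obtains v where "v \<in> verts G" "tile_at G lam v = T"
  using assms by (force simp: tile_count_def card_gt_0_iff)

lemma eq_if_tile_count_one:
  assumes "tile_count G lam T = 1" "v \<in> verts G" "w \<in> verts G"
    and "tile_at G lam v = T" "tile_at G lam w = T"
  shows "v = w"
proof -
  obtain u where u: "{v \<in> verts G. tile_at G lam v = T} = {u}"
    using assms(1) by (auto simp: tile_count_def card_1_singleton_iff)
  have "v \<in> {v \<in> verts G. tile_at G lam v = T}" "w \<in> {v \<in> verts G. tile_at G lam v = T}"
    using assms(2-5) by simp_all
  then show ?thesis
    unfolding u by simp
qed

section \<open>Exchanging two half-edges\<close>

definition swap_half_edges :: "mgraph \<Rightarrow> nat \<times> bool \<Rightarrow> nat \<times> bool \<Rightarrow> mgraph" where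
  "swap_half_edges G h h' = G\<lparr>endp := curry (case_prod (endp G) \<circ> transpose h h')\<rparr>"

lemma swap_half_edges_simps [simp]:
  "verts (swap_half_edges G h h') = verts G"
  "edges (swap_half_edges G h h') = edges G"
  "endp (swap_half_edges G h h') e b = case_prod (endp G) (transpose h h' (e, b))"
  by (simp_all add: swap_half_edges_def)

lemma swap_half_edges_ends:
  assumes "fst h \<noteq> fst h'"
  shows "ends (swap_half_edges G h h') (fst h) = {#near G h', far G h#}"
    and "e \<notin> {fst h, fst h'} \<Longrightarrow> endp (swap_half_edges G h h') e b = endp G e b"
proof -
  have "(fst h, \<not> snd h) \<noteq> h" "(fst h, \<not> snd h) \<noteq> h'"
    using assms by (auto simp: prod_eq_iff)
  then show "ends (swap_half_edges G h h') (fst h) = {#near G h', far G h#}"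
    using ends_from[of "swap_half_edges G h h'" "fst h" "snd h"]
    by (simp add: near_def far_def split: prod.splits)
  show "e \<notin> {fst h, fst h'} \<Longrightarrow> endp (swap_half_edges G h h') e b = endp G e b"
    by (auto simp: transpose_def)
qed

lemma half_edges_at_swap:
  assumes "fst h \<in> edges G" "fst h' \<in> edges G"
  shows "half_edges_at (swap_half_edges G h h') v = transpose h h' ` half_edges_at G v"
proof -
  have fst_edges: "fst (transpose h h' x) \<in> edges G \<longleftrightarrow> fst x \<in> edges G" for x
    using assms by (auto simp: transpose_def)
  have "x \<in> half_edges_at (swap_half_edges G h h') v \<longleftrightarrow> transpose h h' x \<in> half_edges_at G v" for x
    using fst_edges[of x] by (cases x; cases "transpose h h' x") (auto simp: half_edges_at_def)
  then show ?thesis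
    by (simp add: set_eq_iff in_transpose_image_iff)
qed

lemma wf_graph_swap:
  assumes "wf_graph G" "fst h \<in> edges G" "fst h' \<in> edges G"
  shows "wf_graph (swap_half_edges G h h')"
  using assms by (auto simp: wf_graph_def transpose_def split: prod.splits)

lemma tile_at_swap:
  assumes "fst h \<in> edges G" "fst h' \<in> edges G" "case_prod lam h = case_prod lam h'"
  shows "tile_at (swap_half_edges G h h') lam v = tile_at G lam v"
proof -
  have same_label: "case_prod lam \<circ> transpose h h' = case_prod lam"
  proof
    fix x
    show "(case_prod lam \<circ> transpose h h') x = case_prod lam x"
      using assms(3) by (cases "x = h"; cases "x = h'") simp_all
  qed
  have "tile_at (swap_half_edges G h h') lam v
      = image_mset (case_prod lam) (image_mset (transpose h h') (mset_set (half_edges_at G v)))"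
    unfolding tile_at_half_edges half_edges_at_swap[OF assms(1,2)]
      image_mset_mset_set[OF inj_on_transpose] ..
  also have "\<dots> = tile_at G lam v"
    unfolding image_mset.compositionality same_label tile_at_half_edges ..
  finally show ?thesis .
qed

lemma realizes_swap:
  assumes "assembly_design G lam" "pot_of G lam \<subseteq> P"
    and "fst h \<in> edges G" "fst h' \<in> edges G" "case_prod lam h = case_prod lam h'"
  shows "realizes P (swap_half_edges G h h')"
  unfolding realizes_def
proof (intro exI conjI)
  show "assembly_design (swap_half_edges G h h') lam"
    using assms(1) by (simp add: assembly_design_def)
  show "pot_of (swap_half_edges G h h') lam \<subseteq> P"
    using assms(2) tile_at_swap[OF assms(3-5)] by (simp add: pot_of_def)
qed

lemma graph_iso_swap:
  assumes "realizes_S3 P G" "wf_graph G" "assembly_design G lam" "pot_of G lam \<subseteq> P"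
    and "fst h \<in> edges G" "fst h' \<in> edges G" "case_prod lam h = case_prod lam h'"
  shows "graph_iso G (swap_half_edges G h h')"
  using assms realizes_swap[OF assms(3-7)] wf_graph_swap[OF assms(2,5,6)]
  by (simp add: realizes_S3_def)

text \<open>Connectivity of G with the edges in F deleted, phrased as: every two-valued function
  that agrees at the ends of each remaining edge is constant.\<close>

definition connected_without :: "mgraph \<Rightarrow> nat set \<Rightarrow> bool" where
  "connected_without G F \<longleftrightarrow> (\<forall>d :: nat \<Rightarrow> bool.
     (\<forall>e\<in>edges G - F. d (endp G e True) = d (endp G e False)) \<longrightarrow> (\<forall>u\<in>verts G. \<forall>v\<in>verts G. d u = d v))"

text \<open>Exchanges of two half-edges that create neither parallel edges nor an edge inside a
  colour class.\<close>

definition swap_compatible :: "mgraph \<Rightarrow> (nat \<Rightarrow> bool) \<Rightarrow> nat \<times> bool \<Rightarrow> nat \<times> bool \<Rightarrow> bool" where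
  "swap_compatible G side h h' \<longleftrightarrow> near G h = near G h' \<or>
     side (near G h) = side (near G h') \<and>
     (far G h = far G h' \<or> \<not> adjacent G (near G h') (far G h) \<and> \<not> adjacent G (near G h) (far G h'))"

lemma swap_compatible_far:
  assumes "swap_compatible G side h h'" "h \<in> half_edges_at G v" "h' \<in> half_edges_at G v'" "v \<noteq> v'"
  shows "far G h = far G h' \<or> far G h \<notin> neighbours G v' \<and> far G h' \<notin> neighbours G v"
  using assms by (auto simp: swap_compatible_def mem_half_edges_at neighbours_def)

lemma swap_no_parallel_edges_not_adjacent:
  assumes "no_parallel_edges (swap_half_edges G h h')"
    and "fst h \<in> edges G" "fst h \<noteq> fst h'" "near G h \<noteq> near G h'" "far G h \<noteq> far G h'"
  shows "\<not> adjacent G (near G h') (far G h)"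
proof
  assume "adjacent G (near G h') (far G h)"
  then obtain e where e: "e \<in> edges G" "ends G e = {#near G h', far G h#}"
    by (auto simp: adjacent_def)
  have "e \<noteq> fst h"
    using e(2) assms(4) by (auto simp: ends_near_far mset_doubleton_eq_iff)
  moreover have "e \<noteq> fst h'"
    using e(2) assms(5) by (auto simp: ends_near_far mset_doubleton_eq_iff)
  ultimately have "ends (swap_half_edges G h h') e = ends (swap_half_edges G h h') (fst h)"
    using e(2) swap_half_edges_ends[OF assms(3)] by (simp add: ends_def)
  then show False
    using assms(1,2) e(1) \<open>e \<noteq> fst h\<close> by (auto simp: no_parallel_edges_def inj_on_def)
qed

lemma swap_bipartite_same_side:
  assumes "bipartite (swap_half_edges G h h')" "proper_colouring G side"
    and "connected_without G {fst h, fst h'}" "wf_graph G"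
    and "fst h \<in> edges G" "fst h' \<in> edges G" "fst h \<noteq> fst h'"
  shows "side (near G h) = side (near G h')"
proof -
  obtain c where c: "proper_colouring (swap_half_edges G h h') c"
    using assms(1) by (auto simp: bipartite_def)
  define d where "d v \<longleftrightarrow> c v = side v" for v
  have "d (endp G e True) = d (endp G e False)" if "e \<in> edges G - {fst h, fst h'}" for e
    using proper_colouringD[OF c, of e True] proper_colouringD[OF assms(2), of e True] that
      swap_half_edges_ends(2)[OF assms(7)] by (auto simp: d_def)
  then have d_const: "d u = d v" if "u \<in> verts G" "v \<in> verts G" for u v
    using assms(3) that unfolding connected_without_def by blast
  have "c (near G h') \<noteq> c (far G h)"
    using proper_colouring_ends[OF c _ swap_half_edges_ends(1)[OF assms(7)]] assms(5) by simp
  moreover have "d (near G h') = d (far G h)"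
    using assms(4-6) by (intro d_const) (simp_all add: near_def far_def wf_graph_def)
  moreover have "side (near G h) \<noteq> side (far G h)"
    using proper_colouringD[OF assms(2) assms(5), of "snd h"] by (simp add: near_def far_def)
  ultimately show ?thesis
    by (auto simp: d_def)
qed

text \<open>Exchanging two half-edges with the same cohesive-end type gives a graph realized by
  the same pot on the same vertices, so under Scenario 3 it is isomorphic to G and therefore
  again simple and bipartite.\<close>

lemma equal_labels_swap_compatible:
  assumes "realizes_S3 P G" "wf_graph G" "no_parallel_edges G" "proper_colouring G side"
    and "\<forall>e\<in>edges G. \<forall>e'\<in>edges G. connected_without G {e, e'}"
    and "assembly_design G lam" "pot_of G lam \<subseteq> P"
    and "fst h \<in> edges G" "fst h' \<in> edges G" "case_prod lam h = case_prod lam h'"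
  shows "swap_compatible G side h h'"
proof (cases "near G h = near G h'")
  case False
  have "fst h \<noteq> fst h'"
  proof
    assume "fst h = fst h'"
    moreover from this False have "snd h' \<noteq> snd h"
      by (cases "snd h"; cases "snd h'") (auto simp: near_def)
    ultimately have "h' = opposite h"
      by (auto simp: opposite_def prod_eq_iff)
    then show False
      using assms(10) label_opposite[OF assms(6,8)] by simp
  qed
  have iso: "graph_iso G (swap_half_edges G h h')"
    using graph_iso_swap assms by blast
  have "side (near G h) = side (near G h')"
    using swap_bipartite_same_side[OF _ assms(4) _ assms(2,8,9) \<open>fst h \<noteq> fst h'\<close>]
      bipartite_iso[OF assms(2) iso] assms(4,5,8,9) by (auto simp: bipartite_def)
  moreover have "\<not> adjacent G (near G h') (far G h) \<and> \<not> adjacent G (near G h) (far G h')"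
    if "far G h \<noteq> far G h'"
  proof -
    have "no_parallel_edges (swap_half_edges G h h')" "no_parallel_edges (swap_half_edges G h' h)"
      using no_parallel_edges_iso[OF assms(2) iso assms(3)]
      by (simp_all add: transpose_commute swap_half_edges_def)
    then show ?thesis
      using swap_no_parallel_edges_not_adjacent assms(8,9) False that \<open>fst h \<noteq> fst h'\<close> by metis
  qed
  ultimately show ?thesis
    by (auto simp: swap_compatible_def)
qed (simp add: swap_compatible_def)

lemma less_8_iff: "(v::nat) < 8 \<longleftrightarrow> v = 0 \<or> v = 1 \<or> v = 2 \<or> v = 3 \<or> v = 4 \<or> v = 5 \<or> v = 6 \<or> v = 7"
  by presburger

lemma less_12_iff: "(e::nat) < 12 \<longleftrightarrow>
    e = 0 \<or> e = 1 \<or> e = 2 \<or> e = 3 \<or> e = 4 \<or> e = 5 \<or> e = 6 \<or> e = 7 \<or> e = 8 \<or> e = 9 \<or> e = 10 \<or> e = 11"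
  by presburger

lemma verts_Q3 [simp]: "verts Q3 = {0..<8}" and edges_Q3 [simp]: "edges Q3 = {0..<12}"
  by (simp_all add: Q3_def)

lemma endp_Q3: "endp Q3 e b = (if b then fst (cube_edge_list ! e) else snd (cube_edge_list ! e))"
  by (simp add: Q3_def)

lemma half_edges_at_Q3_filter:
  "half_edges_at Q3 v = set (filter (\<lambda>h. near Q3 h = v) (List.product [0..<12] [True, False]))"
  by (auto simp: mem_half_edges_at)

lemma half_edges_at_Q3:
  "half_edges_at Q3 0 = {(0, True), (4, True), (8, True)}"
  "half_edges_at Q3 1 = {(0, False), (5, True), (9, True)}"
  "half_edges_at Q3 2 = {(1, True), (4, False), (10, True)}"
  "half_edges_at Q3 3 = {(1, False), (5, False), (11, True)}"
  "half_edges_at Q3 4 = {(2, True), (6, True), (8, False)}"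
  "half_edges_at Q3 5 = {(2, False), (7, True), (9, False)}"
  "half_edges_at Q3 6 = {(3, True), (6, False), (10, False)}"
  "half_edges_at Q3 7 = {(3, False), (7, False), (11, False)}"
  by (simp_all add: half_edges_at_Q3_filter upt_rec near_def endp_Q3 cube_edge_list_def
      numeral_eq_Suc insert_commute)

lemma neighbours_Q3:
  "neighbours Q3 0 = {1, 2, 4}" "neighbours Q3 1 = {0, 3, 5}"
  "neighbours Q3 2 = {0, 3, 6}" "neighbours Q3 3 = {1, 2, 7}"
  "neighbours Q3 4 = {0, 5, 6}" "neighbours Q3 5 = {1, 4, 7}"
  "neighbours Q3 6 = {2, 4, 7}" "neighbours Q3 7 = {3, 5, 6}"
  unfolding neighbours_eq_far_image half_edges_at_Q3
  by (simp_all add: far_def endp_Q3 cube_edge_list_def insert_commute)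

text \<open>The vertices of odd binary weight form one colour class. In the case distinctions over
  vertices below, One_nat_def is removed from the simpset so that the vertex 1 is not
  rewritten to Suc 0 before the tables above apply.\<close>

definition Q3_side :: "nat \<Rightarrow> bool" where
  "Q3_side v \<longleftrightarrow> v \<in> {1, 2, 4, 7}"

lemma wf_graph_Q3: "wf_graph Q3"
  by (auto simp: wf_graph_def endp_Q3 cube_edge_list_def less_12_iff)

lemma loop_free_Q3: "loop_free Q3"
  by (auto simp: loop_free_def endp_Q3 cube_edge_list_def less_12_iff)

lemma proper_colouring_Q3: "proper_colouring Q3 Q3_side"
  by (auto simp: proper_colouring_def Q3_side_def endp_Q3 cube_edge_list_def less_12_iff)

lemma no_parallel_edges_Q3: "no_parallel_edges Q3"
  unfolding no_parallel_edges_def inj_on_def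
  by (auto simp: ends_def endp_Q3 cube_edge_list_def less_12_iff mset_doubleton_eq_iff)

lemma connected_without_Q3:
  assumes "e \<in> edges Q3" "e' \<in> edges Q3"
  shows "connected_without Q3 {e, e'}"
  unfolding connected_without_def
proof (intro allI impI)
  fix d :: "nat \<Rightarrow> bool"
  assume "\<forall>f\<in>edges Q3 - {e, e'}. d (endp Q3 f True) = d (endp Q3 f False)"
  then have "\<forall>f<12. f \<noteq> e \<longrightarrow> f \<noteq> e' \<longrightarrow> d (fst (cube_edge_list ! f)) = d (snd (cube_edge_list ! f))"
    unfolding endp_Q3 if_True if_False by simp
  with assms have "\<forall>v<8. d v = d 0"
    unfolding edges_Q3 atLeastLessThan_iff less_12_iff less_8_iff
    by (elim conjE disjE) (simp_all add: cube_edge_list_def all_conj_distrib, argo+)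
  then show "\<forall>u\<in>verts Q3. \<forall>v\<in>verts Q3. d u = d v"
    by (metis atLeastLessThan_iff verts_Q3)
qed

lemma card_half_edges_at_Q3: "v \<in> verts Q3 \<Longrightarrow> card (half_edges_at Q3 v) = 3"
  unfolding verts_Q3 atLeastLessThan_iff less_8_iff
  by (elim conjE disjE) (simp_all add: half_edges_at_Q3 del: One_nat_def)

lemma card_neighbours_Q3: "v \<in> verts Q3 \<Longrightarrow> card (neighbours Q3 v) = 3"
  unfolding verts_Q3 atLeastLessThan_iff less_8_iff
  by (elim conjE disjE) (simp_all add: neighbours_Q3 del: One_nat_def)

lemma Q3_private_neighbour_unique:
  assumes "u \<in> verts Q3" "u' \<in> verts Q3" "u \<noteq> u'" "Q3_side u = Q3_side u'"
    and "x \<in> neighbours Q3 u - neighbours Q3 u'" "y \<in> neighbours Q3 u - neighbours Q3 u'"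
  shows "x = y"
  using assms unfolding verts_Q3 atLeastLessThan_iff less_8_iff
  by (elim conjE disjE) (auto simp: neighbours_Q3 Q3_side_def simp del: One_nat_def)

lemma Q3_private_neighbour_exists:
  assumes "u \<in> verts Q3" "u' \<in> verts Q3" "u \<noteq> u'" "Q3_side u = Q3_side u'"
  shows "\<exists>x\<in>neighbours Q3 u. x \<notin> neighbours Q3 u'"
  using assms unfolding verts_Q3 atLeastLessThan_iff less_8_iff
  by (elim conjE disjE) (simp_all add: neighbours_Q3 Q3_side_def del: One_nat_def)

lemma Q3_neighbours_cover:
  assumes "a \<in> verts Q3" "b \<in> verts Q3" "c \<in> verts Q3" "a \<noteq> b" "a \<noteq> c" "b \<noteq> c"
    and "Q3_side a = Q3_side b" "Q3_side a = Q3_side c"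
  shows "neighbours Q3 b \<subseteq> neighbours Q3 a \<union> neighbours Q3 c"
  using assms unfolding verts_Q3 atLeastLessThan_iff less_8_iff
  by (elim conjE disjE) (simp_all add: neighbours_Q3 Q3_side_def del: One_nat_def)

definition Q3_colour_class :: "bool \<Rightarrow> nat set" where
  "Q3_colour_class s = {v \<in> verts Q3. Q3_side v = s}"

lemma Q3_colour_classes:
  "Q3_colour_class True = {1, 2, 4, 7}" "Q3_colour_class False = {0, 3, 5, 6}"
  by (auto simp: Q3_colour_class_def Q3_side_def)

lemma finite_Q3_colour_class: "finite (Q3_colour_class s)"
  by (simp add: Q3_colour_class_def)

lemma neighbours_Q3_subset_colour_class:
  "u \<in> Q3_colour_class s \<Longrightarrow> neighbours Q3 u \<subseteq> Q3_colour_class (\<not> s)"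
  using proper_colouring_neighbour[OF proper_colouring_Q3] wf_graph_Q3
  by (fastforce simp: Q3_colour_class_def neighbours_def adjacent_def wf_graph_def ends_def
      mset_doubleton_eq_iff)

section \<open>At least six tiles\<close>

context
  fixes P :: "tile set" and lam :: "nat \<Rightarrow> bool \<Rightarrow> cend"
  assumes S3: "realizes_S3 P Q3" and design: "assembly_design Q3 lam" and pot: "pot_of Q3 lam \<subseteq> P"
begin

lemma Q3_equal_labels_compatible:
  assumes "h \<in> half_edges_at Q3 v" "h' \<in> half_edges_at Q3 v'" "case_prod lam h = case_prod lam h'"
  shows "swap_compatible Q3 Q3_side h h'"
  using assms connected_without_Q3
  by (intro equal_labels_swap_compatible[OF S3 wf_graph_Q3 no_parallel_edges_Q3 proper_colouring_Q3
        _ design pot]) (auto simp: mem_half_edges_at)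

lemma Q3_equal_labels_far:
  assumes "h \<in> half_edges_at Q3 v" "h' \<in> half_edges_at Q3 v'" "v \<noteq> v'"
    and "case_prod lam h = case_prod lam h'"
  shows "far Q3 h = far Q3 h' \<or> far Q3 h \<notin> neighbours Q3 v' \<and> far Q3 h' \<notin> neighbours Q3 v"
  using swap_compatible_far[OF Q3_equal_labels_compatible[OF assms(1,2,4)] assms(1-3)] .

lemma Q3_shared_label:
  assumes "h \<in> half_edges_at Q3 v" "tile_at Q3 lam v = tile_at Q3 lam w"
  obtains h' where "h' \<in> half_edges_at Q3 w" "case_prod lam h' = case_prod lam h"
  using shared_label[of Q3 h v lam w] assms by auto

lemma Q3_tiles_differ_across_sides:
  assumes "v \<in> verts Q3" "w \<in> verts Q3" "Q3_side v \<noteq> Q3_side w"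
  shows "tile_at Q3 lam v \<noteq> tile_at Q3 lam w"
proof
  assume tiles: "tile_at Q3 lam v = tile_at Q3 lam w"
  obtain h where h: "h \<in> half_edges_at Q3 v"
    using card_half_edges_at_Q3[OF assms(1)] by (metis card.empty ex_in_conv zero_neq_numeral)
  obtain h' where h': "h' \<in> half_edges_at Q3 w" "case_prod lam h' = case_prod lam h"
    using h tiles by (rule Q3_shared_label)
  have "swap_compatible Q3 Q3_side h h'"
    using Q3_equal_labels_compatible[OF h h'(1)] h'(2) by simp
  then show False
    using h h'(1) assms(3) by (auto simp: swap_compatible_def mem_half_edges_at)
qed

text \<open>Matching a half-edge at a that leads away from b with equal-labelled half-edges at b
  and c produces three pairwise compatible half-edges at distinct vertices; in the cube this
  forces all three to lead to one vertex, a neighbour of b after all.\<close>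

lemma Q3_no_three_equal_tiles:
  assumes "a \<in> verts Q3" "b \<in> verts Q3" "c \<in> verts Q3" "a \<noteq> b" "a \<noteq> c" "b \<noteq> c"
    and "tile_at Q3 lam a = tile_at Q3 lam b" "tile_at Q3 lam a = tile_at Q3 lam c"
  shows False
proof -
  have sides: "Q3_side a = Q3_side b" "Q3_side a = Q3_side c"
    using Q3_tiles_differ_across_sides assms by blast+
  obtain x where x: "x \<in> neighbours Q3 a" "x \<notin> neighbours Q3 b"
    using Q3_private_neighbour_exists[OF assms(1,2,4) sides(1)] by blast
  obtain h where h: "h \<in> half_edges_at Q3 a" "far Q3 h = x"
    using x(1) by (rule half_edge_towards)
  obtain h' where h': "h' \<in> half_edges_at Q3 b" "case_prod lam h' = case_prod lam h"
    using h(1) assms(7) by (rule Q3_shared_label)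
  obtain h'' where h'': "h'' \<in> half_edges_at Q3 c" "case_prod lam h'' = case_prod lam h"
    using h(1) assms(8) by (rule Q3_shared_label)
  have y: "far Q3 h' \<in> neighbours Q3 b" and z: "far Q3 h'' \<in> neighbours Q3 c"
    using h'(1) h''(1) by (simp_all add: far_in_neighbours)
  have "far Q3 h' \<notin> neighbours Q3 a"
    using Q3_equal_labels_far[OF h(1) h'(1) assms(4)] h'(2) h(2) x(2) y by auto
  then have "far Q3 h' \<in> neighbours Q3 c"
    using Q3_neighbours_cover[OF assms(1,2,3,4,5,6) sides] y by blast
  moreover have "x \<in> neighbours Q3 c"
    using Q3_neighbours_cover[OF assms(2,1,3) _ assms(6,5)] sides x by fastforce
  ultimately have "far Q3 h'' = x" "far Q3 h'' = far Q3 h'"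
    using Q3_equal_labels_far[OF h(1) h''(1) assms(5)] Q3_equal_labels_far[OF h'(1) h''(1) assms(6)]
      h'(2) h''(2) h(2) by auto
  then show False
    using x(2) y by simp
qed

lemma Q3_labels_agree_towards_common_neighbour:
  assumes "a \<noteq> b" "tile_at Q3 lam a = tile_at Q3 lam b"
    and "h \<in> half_edges_at Q3 a" "k \<in> half_edges_at Q3 b" "far Q3 h = far Q3 k"
  shows "case_prod lam h = case_prod lam k"
proof -
  obtain h' where h': "h' \<in> half_edges_at Q3 b" "case_prod lam h' = case_prod lam h"
    using assms(3,2) by (rule Q3_shared_label)
  have "far Q3 k \<in> neighbours Q3 b"
    using assms(4) by (rule far_in_neighbours)
  then have "far Q3 h' = far Q3 k"
    using Q3_equal_labels_far[OF assms(3) h'(1) assms(1)] h'(2) assms(5) by auto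
  then have "h' = k"
    using half_edge_eq_if_far_eq[OF loop_free_Q3 no_parallel_edges_Q3 h'(1) assms(4)] by simp
  then show ?thesis
    using h'(2) by simp
qed

lemma Q3_doubled_label:
  assumes "h1 \<in> half_edges_at Q3 u" "h2 \<in> half_edges_at Q3 u" "h1 \<noteq> h2"
    and "tile_at Q3 lam (far Q3 h1) = tile_at Q3 lam (far Q3 h2)"
  shows "case_prod lam h1 = case_prod lam h2"
proof -
  have "far Q3 h1 \<noteq> far Q3 h2"
    using half_edge_eq_if_far_eq[OF loop_free_Q3 no_parallel_edges_Q3 assms(1,2)] assms(3) by blast
  then have "case_prod lam (opposite h1) = case_prod lam (opposite h2)"
    using assms(1,2,4) opposite_half_edge
    by (intro Q3_labels_agree_towards_common_neighbour) (auto simp: mem_half_edges_at)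
  then show ?thesis
    using assms(1,2) label_opposite[OF design] by (simp add: mem_half_edges_at hat_eq_iff)
qed

text \<open>Two vertices whose tiles each contain a doubled cohesive-end type and coincide give four
  equal-labelled, pairwise compatible half-edges at two distinct vertices; but two vertices of
  one colour in the cube share two of their three neighbours.\<close>

lemma Q3_tiles_differ_if_doubled:
  assumes "u \<in> verts Q3" "u' \<in> verts Q3" "u \<noteq> u'"
    and "h1 \<in> half_edges_at Q3 u" "h2 \<in> half_edges_at Q3 u" "h1 \<noteq> h2"
    and "tile_at Q3 lam (far Q3 h1) = tile_at Q3 lam (far Q3 h2)"
    and "h3 \<in> half_edges_at Q3 u'" "h4 \<in> half_edges_at Q3 u'" "h3 \<noteq> h4"
    and "tile_at Q3 lam (far Q3 h3) = tile_at Q3 lam (far Q3 h4)"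
  shows "tile_at Q3 lam u \<noteq> tile_at Q3 lam u'"
proof
  assume tiles: "tile_at Q3 lam u = tile_at Q3 lam u'"
  have lab12: "case_prod lam h1 = case_prod lam h2"
    by (rule Q3_doubled_label[OF assms(4-7)])
  have lab34: "case_prod lam h3 = case_prod lam h4"
    by (rule Q3_doubled_label[OF assms(8-11)])
  have lab13: "case_prod lam h1 = case_prod lam h3"
    using doubled_labels_agree[OF _ card_half_edges_at_Q3[OF assms(1)] card_half_edges_at_Q3[OF assms(2)]
        assms(4-6,8-10) lab12 lab34 tiles] by simp
  have side: "Q3_side u = Q3_side u'"
    using Q3_tiles_differ_across_sides[OF assms(1,2)] tiles by blast
  have far_ne: "far Q3 h1 \<noteq> far Q3 h2" "far Q3 h3 \<noteq> far Q3 h4"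
    using half_edge_eq_if_far_eq[OF loop_free_Q3 no_parallel_edges_Q3] assms(4-6,8-10) by blast+
  have "far Q3 h1 \<in> neighbours Q3 u" "far Q3 h2 \<in> neighbours Q3 u"
    using assms(4,5) by (simp_all add: far_in_neighbours)
  then have "far Q3 h1 \<in> neighbours Q3 u' \<or> far Q3 h2 \<in> neighbours Q3 u'"
    using Q3_private_neighbour_unique[OF assms(1-3) side] far_ne(1) by blast
  moreover have "far Q3 h1 = far Q3 h3 \<or> far Q3 h1 \<notin> neighbours Q3 u'"
    "far Q3 h1 = far Q3 h4 \<or> far Q3 h1 \<notin> neighbours Q3 u'"
    "far Q3 h2 = far Q3 h3 \<or> far Q3 h2 \<notin> neighbours Q3 u'"
    "far Q3 h2 = far Q3 h4 \<or> far Q3 h2 \<notin> neighbours Q3 u'"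
    using Q3_equal_labels_far[OF assms(4,8,3)] Q3_equal_labels_far[OF assms(4,9,3)]
      Q3_equal_labels_far[OF assms(5,8,3)] Q3_equal_labels_far[OF assms(5,9,3)]
      lab12 lab34 lab13 by metis+
  ultimately show False
    using far_ne(2) by auto
qed

lemma Q3_repeated_tile_among_neighbours:
  assumes "u \<in> Q3_colour_class s" "card (tile_at Q3 lam ` Q3_colour_class (\<not> s)) \<le> 2"
  obtains h1 h2 where "h1 \<in> half_edges_at Q3 u" "h2 \<in> half_edges_at Q3 u" "h1 \<noteq> h2"
    "tile_at Q3 lam (far Q3 h1) = tile_at Q3 lam (far Q3 h2)"
proof -
  have u: "u \<in> verts Q3"
    using assms(1) by (simp add: Q3_colour_class_def)
  have "card (tile_at Q3 lam ` neighbours Q3 u) \<le> card (tile_at Q3 lam ` Q3_colour_class (\<not> s))"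
    using neighbours_Q3_subset_colour_class[OF assms(1)]
    by (intro card_mono image_mono) (simp_all add: finite_Q3_colour_class)
  then have "card (tile_at Q3 lam ` neighbours Q3 u) < card (neighbours Q3 u)"
    using assms(2) card_neighbours_Q3[OF u] by linarith
  moreover have "finite (neighbours Q3 u)"
    using card_neighbours_Q3[OF u] by (metis card.infinite zero_neq_numeral)
  ultimately obtain a b where ab: "a \<in> neighbours Q3 u" "b \<in> neighbours Q3 u" "a \<noteq> b"
    "tile_at Q3 lam a = tile_at Q3 lam b"
    using card_image_less_obtains_collision by metis
  obtain h1 where "h1 \<in> half_edges_at Q3 u" "far Q3 h1 = a"
    using ab(1) by (rule half_edge_towards)
  moreover obtain h2 where "h2 \<in> half_edges_at Q3 u" "far Q3 h2 = b"
    using ab(2) by (rule half_edge_towards)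
  ultimately show ?thesis
    using that ab(3,4) by blast
qed

lemma Q3_tiles_inj_on_colour_class:
  assumes "card (tile_at Q3 lam ` Q3_colour_class (\<not> s)) \<le> 2"
  shows "inj_on (tile_at Q3 lam) (Q3_colour_class s)"
proof (rule inj_onI, rule ccontr)
  fix u u' assume u: "u \<in> Q3_colour_class s" and u': "u' \<in> Q3_colour_class s"
    and tiles: "tile_at Q3 lam u = tile_at Q3 lam u'" and "u \<noteq> u'"
  obtain h1 h2 where h12: "h1 \<in> half_edges_at Q3 u" "h2 \<in> half_edges_at Q3 u" "h1 \<noteq> h2"
    "tile_at Q3 lam (far Q3 h1) = tile_at Q3 lam (far Q3 h2)"
    using Q3_repeated_tile_among_neighbours[OF u assms] .
  obtain h3 h4 where h34: "h3 \<in> half_edges_at Q3 u'" "h4 \<in> half_edges_at Q3 u'" "h3 \<noteq> h4"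
    "tile_at Q3 lam (far Q3 h3) = tile_at Q3 lam (far Q3 h4)"
    using Q3_repeated_tile_among_neighbours[OF u' assms] .
  have "u \<in> verts Q3" "u' \<in> verts Q3"
    using u u' by (simp_all add: Q3_colour_class_def)
  then show False
    using Q3_tiles_differ_if_doubled[OF _ _ \<open>u \<noteq> u'\<close> h12 h34] tiles by blast
qed

lemma Q3_two_tiles_per_colour_class: "2 \<le> card (tile_at Q3 lam ` Q3_colour_class s)"
proof -
  have "card (Q3_colour_class s) \<le> 2 * card (tile_at Q3 lam ` Q3_colour_class s)"
    using Q3_no_three_equal_tiles
    by (intro card_le_twice_card_image) (auto simp: Q3_colour_class_def)
  moreover have "card (Q3_colour_class s) = 4"
    by (cases s) (simp_all add: Q3_colour_classes)
  ultimately show ?thesis by simp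
qed

lemma Q3_at_least_six_tiles: "6 \<le> card (pot_of Q3 lam)"
proof -
  let ?T = "\<lambda>s. tile_at Q3 lam ` Q3_colour_class s"
  have pot: "pot_of Q3 lam = ?T True \<union> ?T False"
    by (auto simp: pot_of_def Q3_colour_class_def)
  have "?T True \<inter> ?T False = {}"
    using Q3_tiles_differ_across_sides by (auto simp: Q3_colour_class_def)
  then have card_pot: "card (pot_of Q3 lam) = card (?T True) + card (?T False)"
    unfolding pot by (intro card_Un_disjoint) (simp_all add: Q3_colour_classes)
  have four: "card (?T s) = 4" if "card (?T (\<not> s)) \<le> 2" for s
    using card_image[OF Q3_tiles_inj_on_colour_class[OF that]]
    by (cases s) (simp_all add: Q3_colour_classes)
  have "card (?T True) \<le> 2 \<Longrightarrow> card (?T False) = 4" "card (?T False) \<le> 2 \<Longrightarrow> card (?T True) = 4"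
    using four[of False] four[of True] by simp_all
  then show ?thesis
    using Q3_two_tiles_per_colour_class[of True] Q3_two_tiles_per_colour_class[of False] card_pot
    by linarith
qed

end

section \<open>A pot of six tiles\<close>

definition tA :: tile where "tA = {#(0, False), (3, False), (3, False)#}"
definition tB :: tile where "tB = {#(0, True), (4, False), (4, False)#}"
definition tC :: tile where "tC = {#(1, False), (3, True), (5, True)#}"
definition tD :: tile where "tD = {#(1, True), (4, True), (6, True)#}"
definition tE :: tile where "tE = {#(2, False), (5, False), (5, False)#}"
definition tF :: tile where "tF = {#(2, True), (6, False), (6, False)#}"

definition cube_pot :: "tile set" where
  "cube_pot = {tA, tB, tC, tD, tE, tF}"

lemmas cube_tiles_def = tA_def tB_def tC_def tD_def tE_def tF_def

lemma count_cube_tiles: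
  "count tA x = (if x = (0, False) then 1 else if x = (3, False) then 2 else 0)"
  "count tB x = (if x = (0, True) then 1 else if x = (4, False) then 2 else 0)"
  "count tC x = (if x = (1, False) \<or> x = (3, True) \<or> x = (5, True) then 1 else 0)"
  "count tD x = (if x = (1, True) \<or> x = (4, True) \<or> x = (6, True) then 1 else 0)"
  "count tE x = (if x = (2, False) then 1 else if x = (5, False) then 2 else 0)"
  "count tF x = (if x = (2, True) then 1 else if x = (6, False) then 2 else 0)"
  by (auto simp: cube_tiles_def)

lemma cube_tiles_distinct:
  "tA \<noteq> tB" "tA \<noteq> tC" "tA \<noteq> tD" "tA \<noteq> tE" "tA \<noteq> tF"
  "tB \<noteq> tC" "tB \<noteq> tD" "tB \<noteq> tE" "tB \<noteq> tF"
  "tC \<noteq> tD" "tC \<noteq> tE" "tC \<noteq> tF"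
  "tD \<noteq> tE" "tD \<noteq> tF" "tE \<noteq> tF"
  by (simp_all add: cube_tiles_def mset_tripleton_eq_iff)

lemma card_cube_pot: "card cube_pot = 6"
  using cube_tiles_distinct by (simp add: cube_pot_def)

lemma is_pot_cube_pot: "is_pot cube_pot"
  by (auto simp: is_pot_def cube_pot_def cube_tiles_def hat_def)

lemma sum_cube_pot:
  "(\<Sum>T\<in>cube_pot. g T) = g tA + g tB + g tC + g tD + g tE + g tF"
  using cube_tiles_distinct by (simp add: cube_pot_def add.assoc)

text \<open>Vertices 0, ..., 7 of Q3 receive the tiles tA, tB, tC, tD, tC, tD, tE, tF; the list
  holds the cohesive-end type at the first end of each edge.\<close>

definition cube_labels :: "cend list" where
  "cube_labels = [(0, False), (1, False), (1, False), (2, False), (3, False), (4, False),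
                  (5, True), (6, True), (3, False), (4, False), (5, True), (6, True)]"

definition cube_design :: "nat \<Rightarrow> bool \<Rightarrow> cend" where
  "cube_design e b = (if b then cube_labels ! e else hat (cube_labels ! e))"

lemma realizes_cube_pot_Q3: "realizes cube_pot Q3"
  unfolding realizes_def
proof (intro exI conjI)
  show "assembly_design Q3 cube_design"
    by (simp add: assembly_design_def cube_design_def)
  show "pot_of Q3 cube_design \<subseteq> cube_pot"
    unfolding pot_of_def verts_Q3
  proof
    fix T assume "T \<in> tile_at Q3 cube_design ` {0..<8}"
    then obtain v where "v < 8" "T = tile_at Q3 cube_design v"
      by auto
    then show "T \<in> cube_pot"
      unfolding less_8_iff
      by (elim disjE) (simp_all add: tile_at_half_edges half_edges_at_Q3 cube_design_def
          cube_labels_def cube_pot_def cube_tiles_def hat_def del: One_nat_def)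
  qed
qed

context
  fixes H :: mgraph and lam :: "nat \<Rightarrow> bool \<Rightarrow> cend"
  assumes wf: "wf_graph H" and design: "assembly_design H lam" and pot: "pot_of H lam \<subseteq> cube_pot"
begin

lemma tile_at_in_cube_pot: "v \<in> verts H \<Longrightarrow> tile_at H lam v \<in> cube_pot"
  using pot by (auto simp: pot_of_def)

lemma sum_tiles_cube_pot:
  "(\<Sum>v\<in>verts H. g (tile_at H lam v)) = (\<Sum>T\<in>cube_pot. tile_count H lam T * g T)"
  using wf tile_at_in_cube_pot unfolding tile_count_def
  by (intro sum_eq_sum_card_fibres) (simp_all add: wf_graph_def cube_pot_def)

lemma tile_counts_cube_pot:
  "tile_count H lam tB = tile_count H lam tA" "tile_count H lam tC = 2 * tile_count H lam tA"
  "tile_count H lam tD = 2 * tile_count H lam tA" "tile_count H lam tE = tile_count H lam tA"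
  "tile_count H lam tF = tile_count H lam tA"
proof -
  have balance: "(\<Sum>T\<in>cube_pot. tile_count H lam T * count T x) =
      (\<Sum>T\<in>cube_pot. tile_count H lam T * count T (hat x))" for x
    using sum_count_tile_at_hat[OF wf design, of x] sum_tiles_cube_pot[of "\<lambda>T. count T x"]
      sum_tiles_cube_pot[of "\<lambda>T. count T (hat x)"] by simp
  have "tile_count H lam tA = tile_count H lam tB" "tile_count H lam tC = tile_count H lam tD"
    "tile_count H lam tE = tile_count H lam tF" "2 * tile_count H lam tA = tile_count H lam tC"
    "2 * tile_count H lam tE = tile_count H lam tC"
    using balance[of "(0, False)"] balance[of "(1, False)"] balance[of "(2, False)"]
      balance[of "(3, False)"] balance[of "(5, False)"]
    by (simp_all add: sum_cube_pot count_cube_tiles hat_def)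
  then show "tile_count H lam tB = tile_count H lam tA" "tile_count H lam tC = 2 * tile_count H lam tA"
    "tile_count H lam tD = 2 * tile_count H lam tA" "tile_count H lam tE = tile_count H lam tA"
    "tile_count H lam tF = tile_count H lam tA"
    by linarith+
qed

lemma card_verts_cube_pot: "card (verts H) = 8 * tile_count H lam tA"
  using sum_tiles_cube_pot[of "\<lambda>_. 1"] tile_counts_cube_pot by (simp add: sum_cube_pot)

lemma two_card_edges_cube_pot: "2 * card (edges H) = 3 * card (verts H)"
proof -
  have "2 * card (edges H) = (\<Sum>v\<in>verts H. size (tile_at H lam v))"
    using sum_size_tile_at[OF wf] by simp
  also have "\<dots> = (\<Sum>T\<in>cube_pot. tile_count H lam T * 3)"
    unfolding sum_tiles_cube_pot by (intro sum.cong) (auto simp: cube_pot_def cube_tiles_def)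
  also have "\<dots> = 3 * card (verts H)"
    using card_verts_cube_pot tile_counts_cube_pot by (simp add: sum_cube_pot)
  finally show ?thesis .
qed

lemma tile_with_cohesive_end:
  assumes "v \<in> verts H"
  shows "(0, True) \<in># tile_at H lam v \<Longrightarrow> tile_at H lam v = tB"
    and "(1, True) \<in># tile_at H lam v \<Longrightarrow> tile_at H lam v = tD"
    and "(2, True) \<in># tile_at H lam v \<Longrightarrow> tile_at H lam v = tF"
    and "(3, False) \<in># tile_at H lam v \<Longrightarrow> tile_at H lam v = tA"
    and "(4, False) \<in># tile_at H lam v \<Longrightarrow> tile_at H lam v = tB"
    and "(5, False) \<in># tile_at H lam v \<Longrightarrow> tile_at H lam v = tE"
    and "(6, False) \<in># tile_at H lam v \<Longrightarrow> tile_at H lam v = tF"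
  using tile_at_in_cube_pot[OF assms] by (auto simp: cube_pot_def cube_tiles_def)

lemma bond_partner:
  assumes "c \<in> verts H" "tile_at H lam c = tC"
  obtains k where "k \<in> half_edges_at H c" "case_prod lam k = (1, False)"
    "far H k \<in> verts H" "tile_at H lam (far H k) = tD"
proof -
  have "(1, False) \<in># tile_at H lam c"
    using assms(2) by (simp add: cube_tiles_def)
  then obtain k where k: "k \<in> half_edges_at H c" "case_prod lam k = (1, False)"
    using wf by (auto simp: in_tile_at_iff wf_graph_def)
  moreover have "far H k \<in> verts H"
    using k(1) wf by (auto simp: far_def mem_half_edges_at wf_graph_def)
  moreover have "tile_at H lam (far H k) = tD"
    using complement_in_tile_at_far[OF wf design k(1)] k(2)
      tile_with_cohesive_end(2)[OF \<open>far H k \<in> verts H\<close>]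
    by (simp add: hat_def)
  ultimately show ?thesis
    using that by blast
qed

lemma bond_partners_distinct:
  assumes "k1 \<in> half_edges_at H c1" "case_prod lam k1 = (1, False)"
    and "k2 \<in> half_edges_at H c2" "case_prod lam k2 = (1, False)"
    and "tile_at H lam (far H k1) = tD" "c1 \<noteq> c2"
  shows "far H k1 \<noteq> far H k2"
proof
  assume far_eq: "far H k1 = far H k2"
  have "opposite k1 \<in> half_edges_at H (far H k1)" "opposite k2 \<in> half_edges_at H (far H k1)"
    using opposite_half_edge[OF assms(1)] opposite_half_edge[OF assms(3)] far_eq by simp_all
  moreover have "case_prod lam (opposite k1) = (1, True)" "case_prod lam (opposite k2) = (1, True)"
    using label_opposite[OF design] assms(1-4) by (simp_all add: mem_half_edges_at hat_def)
  moreover have "count (tile_at H lam (far H k1)) (1, True) = 1"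
    using assms(5) by (simp add: count_cube_tiles)
  moreover have "finite (edges H)"
    using wf by (simp add: wf_graph_def)
  ultimately have "opposite k1 = opposite k2"
    using half_edge_unique_if_count_one by blast
  then show False
    using assms(1,3,6) by (metis mem_half_edges_at near_far_opposite(2))
qed

lemma neighbour_of_unique_tile:
  assumes "x \<in># tile_at H lam v" "hat x = y"
    and "\<And>w. w \<in> verts H \<Longrightarrow> y \<in># tile_at H lam w \<Longrightarrow> tile_at H lam w = T"
    and "tile_count H lam T = 1" "u \<in> verts H" "tile_at H lam u = T"
  shows "u \<in> neighbours H v"
proof (rule neighbour_if_complement_unique[OF wf design assms(1)])
  fix w assume "w \<in> verts H" "hat x \<in># tile_at H lam w"
  then show "w = u"
    using eq_if_tile_count_one[OF assms(4) _ assms(5) _ assms(6)] assms(2,3) by blast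
qed

lemma paired_vertices_cube_pot:
  assumes "card (verts H) = 8"
  obtains c1 d1 c2 d2 where "c1 \<in> verts H" "tile_at H lam c1 = tC" "c2 \<in> verts H" "tile_at H lam c2 = tC"
    "d1 \<in> verts H" "tile_at H lam d1 = tD" "d2 \<in> verts H" "tile_at H lam d2 = tD"
    "c1 \<noteq> c2" "d1 \<noteq> d2" "d1 \<in> neighbours H c1" "d2 \<in> neighbours H c2"
proof -
  have "tile_count H lam tC = 2"
    using assms card_verts_cube_pot tile_counts_cube_pot by simp
  then obtain c1 c2 where c: "{v \<in> verts H. tile_at H lam v = tC} = {c1, c2}" "c1 \<noteq> c2"
    by (auto simp: tile_count_def card_2_iff)
  then have c1: "c1 \<in> verts H" "tile_at H lam c1 = tC" and c2: "c2 \<in> verts H" "tile_at H lam c2 = tC"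
    by blast+
  obtain k1 where k1: "k1 \<in> half_edges_at H c1" "case_prod lam k1 = (1, False)"
    "far H k1 \<in> verts H" "tile_at H lam (far H k1) = tD"
    by (rule bond_partner[OF c1]) blast
  obtain k2 where k2: "k2 \<in> half_edges_at H c2" "case_prod lam k2 = (1, False)"
    "far H k2 \<in> verts H" "tile_at H lam (far H k2) = tD"
    by (rule bond_partner[OF c2]) blast
  show ?thesis
    using that[OF c1 c2 k1(3,4) k2(3,4) c(2) bond_partners_distinct[OF k1(1,2) k2(1,2) k1(4) c(2)]]
      far_in_neighbours[OF k1(1)] far_in_neighbours[OF k2(1)] by blast
qed

lemma neighbours_by_tile_cube_pot:
  assumes "card (verts H) = 8" "u \<in> verts H" "v \<in> verts H"
  shows "tile_at H lam u = tA \<Longrightarrow> tile_at H lam v = tB \<Longrightarrow> v \<in> neighbours H u"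
    and "tile_at H lam u = tE \<Longrightarrow> tile_at H lam v = tF \<Longrightarrow> v \<in> neighbours H u"
    and "tile_at H lam u = tC \<Longrightarrow> tile_at H lam v = tA \<Longrightarrow> v \<in> neighbours H u"
    and "tile_at H lam u = tC \<Longrightarrow> tile_at H lam v = tE \<Longrightarrow> v \<in> neighbours H u"
    and "tile_at H lam u = tD \<Longrightarrow> tile_at H lam v = tB \<Longrightarrow> v \<in> neighbours H u"
    and "tile_at H lam u = tD \<Longrightarrow> tile_at H lam v = tF \<Longrightarrow> v \<in> neighbours H u"
proof -
  have counts: "tile_count H lam tA = 1" "tile_count H lam tB = 1"
    "tile_count H lam tE = 1" "tile_count H lam tF = 1"
    using assms(1) card_verts_cube_pot tile_counts_cube_pot by simp_all
  note rule = neighbour_of_unique_tile[OF _ _ _ _ assms(3)]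
  show "tile_at H lam u = tA \<Longrightarrow> tile_at H lam v = tB \<Longrightarrow> v \<in> neighbours H u"
    by (rule rule[where x = "(0, False)", OF _ _ tile_with_cohesive_end(1) counts(2)])
      (simp_all add: cube_tiles_def hat_def)
  show "tile_at H lam u = tE \<Longrightarrow> tile_at H lam v = tF \<Longrightarrow> v \<in> neighbours H u"
    by (rule rule[where x = "(2, False)", OF _ _ tile_with_cohesive_end(3) counts(4)])
      (simp_all add: cube_tiles_def hat_def)
  show "tile_at H lam u = tC \<Longrightarrow> tile_at H lam v = tA \<Longrightarrow> v \<in> neighbours H u"
    by (rule rule[where x = "(3, True)", OF _ _ tile_with_cohesive_end(4) counts(1)])
      (simp_all add: cube_tiles_def hat_def)
  show "tile_at H lam u = tC \<Longrightarrow> tile_at H lam v = tE \<Longrightarrow> v \<in> neighbours H u"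
    by (rule rule[where x = "(5, True)", OF _ _ tile_with_cohesive_end(6) counts(3)])
      (simp_all add: cube_tiles_def hat_def)
  show "tile_at H lam u = tD \<Longrightarrow> tile_at H lam v = tB \<Longrightarrow> v \<in> neighbours H u"
    by (rule rule[where x = "(4, True)", OF _ _ tile_with_cohesive_end(5) counts(2)])
      (simp_all add: cube_tiles_def hat_def)
  show "tile_at H lam u = tD \<Longrightarrow> tile_at H lam v = tF \<Longrightarrow> v \<in> neighbours H u"
    by (rule rule[where x = "(6, True)", OF _ _ tile_with_cohesive_end(7) counts(4)])
      (simp_all add: cube_tiles_def hat_def)
qed

text \<open>Listing the vertices as a, b, c1, d1, c2, d2, e, f by tile, where bond type 1 joins c1
  to d1 and c2 to d2, embeds every edge of Q3.\<close>

lemma cube_embedding_of_eight_vertices: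
  assumes "card (verts H) = 8"
  obtains vs where "distinct vs" "set vs \<subseteq> verts H" "length vs = 8"
    "\<And>i. i \<in> edges Q3 \<Longrightarrow> vs ! endp Q3 i False \<in> neighbours H (vs ! endp Q3 i True)"
proof -
  have counts: "0 < tile_count H lam tA" "0 < tile_count H lam tB"
    "0 < tile_count H lam tE" "0 < tile_count H lam tF"
    using assms card_verts_cube_pot tile_counts_cube_pot by simp_all
  obtain a where a: "a \<in> verts H" "tile_at H lam a = tA"
    using vertex_with_tile[OF counts(1)] by blast
  obtain b where b: "b \<in> verts H" "tile_at H lam b = tB"
    using vertex_with_tile[OF counts(2)] by blast
  obtain e where e: "e \<in> verts H" "tile_at H lam e = tE"
    using vertex_with_tile[OF counts(3)] by blast
  obtain f where f: "f \<in> verts H" "tile_at H lam f = tF"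
    using vertex_with_tile[OF counts(4)] by blast
  obtain c1 d1 c2 d2 where c: "c1 \<in> verts H" "tile_at H lam c1 = tC" "c2 \<in> verts H" "tile_at H lam c2 = tC"
    and d: "d1 \<in> verts H" "tile_at H lam d1 = tD" "d2 \<in> verts H" "tile_at H lam d2 = tD"
    and cd: "c1 \<noteq> c2" "d1 \<noteq> d2" "d1 \<in> neighbours H c1" "d2 \<in> neighbours H c2"
    by (rule paired_vertices_cube_pot[OF assms]) blast
  note adj = neighbours_by_tile_cube_pot[OF assms]
  have edges: "[a, b, c1, d1, c2, d2, e, f] ! endp Q3 i False
      \<in> neighbours H ([a, b, c1, d1, c2, d2, e, f] ! endp Q3 i True)" if "i \<in> edges Q3" for i
    using that cd(3,4) adj(1)[OF a(1) b(1) a(2) b(2)] adj(2)[OF e(1) f(1) e(2) f(2)] adj(3)[OF c(1) a(1) c(2) a(2)]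
      adj(3)[OF c(3) a(1) c(4) a(2)] adj(4)[OF c(1) e(1) c(2) e(2)] adj(4)[OF c(3) e(1) c(4) e(2)]
      adj(5)[OF d(1) b(1) d(2) b(2)] adj(5)[OF d(3) b(1) d(4) b(2)]
      adj(6)[OF d(1) f(1) d(2) f(2)] adj(6)[OF d(3) f(1) d(4) f(2)]
    unfolding edges_Q3 atLeastLessThan_iff less_12_iff
    by (elim conjE disjE) (simp_all add: endp_Q3 cube_edge_list_def neighbours_sym)
  have "distinct [a, b, c1, d1, c2, d2, e, f]"
    using a(2) b(2) e(2) f(2) c(2,4) d(2,4) cd(1,2) cube_tiles_distinct by auto
  moreover have "set [a, b, c1, d1, c2, d2, e, f] \<subseteq> verts H"
    using a(1) b(1) c(1,3) d(1,3) e(1) f(1) by simp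
  ultimately show ?thesis
    by (rule that) (simp_all add: edges)
qed

lemma graph_iso_Q3_if_eight_vertices:
  assumes "card (verts H) = 8"
  shows "graph_iso Q3 H"
proof -
  obtain vs where vs: "distinct vs" "set vs \<subseteq> verts H" "length vs = 8"
    "\<And>i. i \<in> edges Q3 \<Longrightarrow> vs ! endp Q3 i False \<in> neighbours H (vs ! endp Q3 i True)"
    using cube_embedding_of_eight_vertices[OF assms] by blast
  have fin: "finite (edges H)" "finite (verts H)"
    using wf by (simp_all add: wf_graph_def)
  have "bij_betw (\<lambda>i. vs ! i) (verts Q3) (verts H)"
    using bij_betw_nth_if_card_eq[OF vs(1,2) _ fin(2)] vs(3) assms by simp
  moreover have "card (edges H) = card (edges Q3)"
    using two_card_edges_cube_pot assms by simp
  ultimately show ?thesis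
    using graph_iso_if_edges_embed[OF wf_graph_Q3 no_parallel_edges_Q3 _ fin(1)] vs(4) by blast
qed

end

lemma realizes_S3_cube_pot: "realizes_S3 cube_pot Q3"
  unfolding realizes_S3_def
proof (intro conjI allI impI)
  show "realizes cube_pot Q3"
    by (rule realizes_cube_pot_Q3)
  fix H assume H: "wf_graph H \<and> realizes cube_pot H"
  then obtain lam where lam: "assembly_design H lam" "pot_of H lam \<subseteq> cube_pot"
    by (auto simp: realizes_def)
  have "0 < card (verts H)"
    using H by (simp add: wf_graph_def card_gt_0_iff)
  then show "card (verts Q3) \<le> card (verts H)"
    using card_verts_cube_pot[of H lam] H lam by simp
next
  fix H assume H: "wf_graph H \<and> realizes cube_pot H \<and> card (verts H) = card (verts Q3)"
  then obtain lam where lam: "assembly_design H lam" "pot_of H lam \<subseteq> cube_pot"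
    by (auto simp: realizes_def)
  then show "graph_iso Q3 H"
    using graph_iso_Q3_if_eight_vertices[of H lam] H by simp
qed

lemma six_le_card_if_realizes_S3_Q3:
  assumes "is_pot P" "realizes_S3 P Q3"
  shows "6 \<le> card P"
proof -
  obtain lam where lam: "assembly_design Q3 lam" "pot_of Q3 lam \<subseteq> P"
    using assms(2) by (auto simp: realizes_S3_def realizes_def)
  have "card (pot_of Q3 lam) \<le> card P"
    using assms(1) lam(2) by (intro card_mono) (simp_all add: is_pot_def)
  then show ?thesis
    using Q3_at_least_six_tiles[OF assms(2) lam] by simp
qed

theorem proposition3:
  shows "T3 Q3 = 6"
  unfolding T3_def
proof (rule Least_equality)
  show "\<exists>P. is_pot P \<and> card P = 6 \<and> realizes_S3 P Q3"
    using is_pot_cube_pot card_cube_pot realizes_S3_cube_pot by blast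
  show "\<And>m. \<exists>P. is_pot P \<and> card P = m \<and> realizes_S3 P Q3 \<Longrightarrow> 6 \<le> m"
    using six_le_card_if_realizes_S3_Q3 by blast
qed

end
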